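(* The map $B\mapsto I(B)$, sending a bridge (a nondecreasing càdlàg function $[0,1]\to[0,1]$ of the bridge form) to its interval-partition, is continuous when bridges are endowed with the Skorohod topology and interval-partitions with the Hausdorff distance between complements $d_H$.
   Context: A bridge is a function $B:[0,1]\to[0,1]$ of the form $B(x)=x(1-\sum_i\beta_i)+\sum_i\beta_i\mathbf 1_{\{v_i\le x\}}$ with $\beta_1\ge\beta_2\ge\dots\ge0$, $\sum\beta_i\le1$, and $v_i\in[0,1]$. $I(B)=\operatorname{int}([0,1]\setminus B([0,1]))$, where $B([0,1])$ is the range of $B$. For open subsets $I,\tilde I$ of $(0,1)$, $d_H(I,\tilde I)=\sup_{x\notin I}d(x,[0,1]\setminus\tilde I)\vee\sup_{x\notin\tilde I}d(x,[0,1]\setminus I)$ (complements taken in $[0,1]$). *)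

theory Defs
  imports "HOL-Analysis.Analysis"
begin

text \<open>Finitely many jumps are encoded by beta_i = 0 eventually.\<close>
definition bridge :: "(real \<Rightarrow> real) \<Rightarrow> bool" where
  "bridge B \<longleftrightarrow> (\<exists>(\<beta>::nat \<Rightarrow> real) (v::nat \<Rightarrow> real).
      antimono \<beta> \<and> (\<forall>i. 0 \<le> \<beta> i) \<and> summable \<beta> \<and> suminf \<beta> \<le> 1 \<and>
      (\<forall>i. v i \<in> {0..1}) \<and>
      (\<forall>x\<in>{0..1}. B x = x * (1 - suminf \<beta>) + (\<Sum>i. \<beta> i * (if v i \<le> x then 1 else 0))))"

definition IB :: "(real \<Rightarrow> real) \<Rightarrow> real set" where
  "IB B = interior ({0..1} - B ` {0..1})"

definition dH :: "real set \<Rightarrow> real set \<Rightarrow> real" where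
  "dH I J = max (SUP x\<in>{0..1} - I. infdist x ({0..1} - J))
                (SUP x\<in>{0..1} - J. infdist x ({0..1} - I))"

definition time_changes :: "(real \<Rightarrow> real) set" where
  "time_changes = {l. strict_mono_on {0..1} l \<and> continuous_on {0..1} l \<and> l ` {0..1} = {0..1}}"

definition skorohod_dist :: "(real \<Rightarrow> real) \<Rightarrow> (real \<Rightarrow> real) \<Rightarrow> real" where
  "skorohod_dist f g = Inf ((\<lambda>l. max (SUP t\<in>{0..1}. \<bar>l t - t\<bar>)
                                       (SUP t\<in>{0..1}. \<bar>f t - g (l t)\<bar>)) ` time_changes)"

end

theory Submission
  imports Defs
begin

text \<open>A time change \<open>\<lambda>\<close> with \<open>sup |B - B' \<circ> \<lambda>| < \<epsilon>\<close> is onto \<open>[0,1]\<close>, so every value of \<open>B\<close>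
  is within \<open>\<epsilon>\<close> of a value of \<open>B'\<close> and vice versa. A point of \<open>[0,1]\<close> outside \<open>I(B)\<close> is
  either an endpoint or a limit of values of \<open>B\<close>; in both cases it lies within \<open>\<epsilon>\<close> of
  \<open>[0,1] \ I(B')\<close>, which contains the endpoints and all values of \<open>B'\<close>.\<close>

lemma bridge_range_subset:
  assumes "bridge B"
  shows "B ` {0..1} \<subseteq> {0..1}"
proof
  fix y assume "y \<in> B ` {0..1}"
  then obtain x where x: "x \<in> {0..1}" "y = B x" by auto
  obtain \<beta> v where \<beta>: "\<forall>i. 0 \<le> \<beta> i" "summable \<beta>" "suminf \<beta> \<le> 1"
    and B: "\<forall>x\<in>{0..1}. B x = x * (1 - suminf \<beta>) + (\<Sum>i. \<beta> i * (if v i \<le> x then 1 else 0))"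
    using assms unfolding bridge_def by blast
  let ?jumps = "\<lambda>i. \<beta> i * (if v i \<le> x then 1 else (0::real))"
  have jumps_nonneg: "0 \<le> ?jumps i" and jumps_le: "?jumps i \<le> \<beta> i" for i
    using \<beta>(1) by simp_all
  have "summable ?jumps"
    by (rule summable_comparison_test[OF _ \<beta>(2)]) (use jumps_nonneg jumps_le in auto)
  then have "0 \<le> suminf ?jumps" "suminf ?jumps \<le> suminf \<beta>"
    using jumps_nonneg suminf_nonneg suminf_le[OF jumps_le _ \<beta>(2)] by auto
  moreover have "0 \<le> x * (1 - suminf \<beta>)" "x * (1 - suminf \<beta>) \<le> 1 - suminf \<beta>"
    using x(1) \<beta>(3) by (auto simp: mult_left_le_one_le)
  ultimately show "y \<in> {0..1}" using B x by auto
qed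

lemma bridge_range_bounded: "bridge B \<Longrightarrow> bounded (B ` {0..1})"
  using bridge_range_subset bounded_subset[OF bounded_cbox] by (metis cbox_interval)

lemma interior_unit_interval_diff_subset:
  "interior ({0..1} - R) \<subseteq> {0<..<(1::real)}"
  using interior_mono[of "{0..1} - R" "{0..1::real}"] by auto

lemma infdist_complement_interior_le:
  fixes R R' :: "real set"
  assumes R': "R' \<subseteq> {0..1}" and x: "x \<in> {0..1} - interior ({0..1} - R)"
    and close: "\<forall>y\<in>R. \<exists>y'\<in>R'. dist y y' \<le> d" and "0 \<le> d"
  shows "infdist x ({0..1} - interior ({0..1} - R')) \<le> d"
proof -
  let ?C = "{0..1} - interior ({0..1} - R')"
  have R'_sub: "R' \<subseteq> ?C" using R' interior_subset[of "{0..1} - R'"] by auto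
  show ?thesis
  proof (cases "x = 0 \<or> x = 1")
    case True
    then have "x \<in> ?C" using interior_unit_interval_diff_subset[of R'] by auto
    then show ?thesis using \<open>0 \<le> d\<close> by (simp add: infdist_zero)
  next
    case False
    then have x01: "0 < x" "x < 1" using x by auto
    have "infdist x ?C \<le> d + e" if "e > 0" for e
    proof -
      have "\<exists>y\<in>R. dist x y < e"
      proof (rule ccontr)
        assume "\<not> ?thesis"
        then have "ball x (min e (min x (1 - x))) \<subseteq> {0..1} - R"
          by (auto simp: dist_real_def)
        then have "x \<in> interior ({0..1} - R)"
          using x01 \<open>e > 0\<close> by (intro interiorI[OF open_ball]) auto
        then show False using x by auto
      qed
      then obtain y y' where "y \<in> R" "dist x y < e" "y' \<in> R'" "dist y y' \<le> d"
        using close by blast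
      moreover have "infdist x ?C \<le> dist x y'"
        using \<open>y' \<in> R'\<close> R'_sub by (intro infdist_le) auto
      ultimately show ?thesis using dist_triangle[of x y' y] by linarith
    qed
    then show ?thesis by (rule field_le_epsilon)
  qed
qed

lemma dH_interior_complement_le:
  fixes R R' :: "real set"
  assumes "R \<subseteq> {0..1}" "R' \<subseteq> {0..1}" "0 \<le> d"
    and "\<forall>y\<in>R. \<exists>y'\<in>R'. dist y y' \<le> d" "\<forall>y\<in>R'. \<exists>y'\<in>R. dist y y' \<le> d"
  shows "dH (interior ({0..1} - R)) (interior ({0..1} - R')) \<le> d"
proof -
  have zero_mem: "0 \<in> {0..1} - interior ({0..1} - S)" for S :: "real set"
    using interior_unit_interval_diff_subset[of S] by auto
  have "(SUP x\<in>{0..1} - interior ({0..1} - R). infdist x ({0..1} - interior ({0..1} - R'))) \<le> d"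
    by (rule cSUP_least)
      (use zero_mem[of R] infdist_complement_interior_le[OF assms(2) _ assms(4,3)] in blast)+
  moreover have "(SUP x\<in>{0..1} - interior ({0..1} - R'). infdist x ({0..1} - interior ({0..1} - R))) \<le> d"
    by (rule cSUP_least)
      (use zero_mem[of R'] infdist_complement_interior_le[OF assms(1) _ assms(5,3)] in blast)+
  ultimately show ?thesis unfolding dH_def by simp
qed

lemma skorohod_dist_lt_imp_ranges_close:
  fixes f g :: "real \<Rightarrow> real"
  assumes "bounded (f ` {0..1})" "bounded (g ` {0..1})" "skorohod_dist f g < \<epsilon>"
  obtains d where "0 \<le> d" "d < \<epsilon>"
    "\<forall>y\<in>f ` {0..1}. \<exists>y'\<in>g ` {0..1}. dist y y' \<le> d"
    "\<forall>y\<in>g ` {0..1}. \<exists>y'\<in>f ` {0..1}. dist y y' \<le> d"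
proof -
  let ?F = "\<lambda>l. max (SUP t\<in>{0..1}. \<bar>l t - t\<bar>) (SUP t\<in>{0..1}. \<bar>f t - g (l t)\<bar>)"
  have "(\<lambda>x. x) \<in> time_changes"
    unfolding time_changes_def by (auto simp: strict_mono_on_def)
  then obtain l where l: "l \<in> time_changes" "?F l < \<epsilon>"
    using assms(3) cInf_lessD[of "?F ` time_changes" \<epsilon>] unfolding skorohod_dist_def by blast
  have l_onto: "l ` {0..1} = {0..1}" using l(1) unfolding time_changes_def by auto
  have l_maps: "l t \<in> {0..1}" if "t \<in> {0..1}" for t
    using that l_onto by blast
  obtain M N where M: "\<forall>t\<in>{0..1}. \<bar>f t\<bar> \<le> M" and N: "\<forall>s\<in>{0..1}. \<bar>g s\<bar> \<le> N"
    using assms(1,2) unfolding bounded_iff by auto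
  have "\<bar>f t - g (l t)\<bar> \<le> M + N" if "t \<in> {0..1}" for t
    using M N l_maps[OF that] that abs_triangle_ineq4[of "f t" "g (l t)"] by fastforce
  then have "bdd_above ((\<lambda>t. \<bar>f t - g (l t)\<bar>) ` {0..1})"
    by (intro bdd_aboveI2)
  define d where "d = (SUP t\<in>{0..1}. \<bar>f t - g (l t)\<bar>)"
  have le_d: "\<bar>f t - g (l t)\<bar> \<le> d" if "t \<in> {0..1}" for t
    unfolding d_def by (rule cSUP_upper) fact+
  show ?thesis
  proof
    show "0 \<le> d" using le_d[of 0] by auto
    show "d < \<epsilon>" using l(2) unfolding d_def by linarith
    show "\<forall>y\<in>f ` {0..1}. \<exists>y'\<in>g ` {0..1}. dist y y' \<le> d"
    proof
      fix y assume "y \<in> f ` {0..1}"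
      then obtain t where "t \<in> {0..1}" "y = f t" by auto
      then show "\<exists>y'\<in>g ` {0..1}. dist y y' \<le> d"
        using le_d l_maps by (intro bexI[of _ "g (l t)"]) (auto simp: dist_real_def)
    qed
    show "\<forall>y\<in>g ` {0..1}. \<exists>y'\<in>f ` {0..1}. dist y y' \<le> d"
    proof
      fix y assume "y \<in> g ` {0..1}"
      then obtain t where "t \<in> {0..1}" "y = g (l t)"
        using l_onto by (metis imageE)
      then show "\<exists>y'\<in>f ` {0..1}. dist y y' \<le> d"
        using le_d by (intro bexI[of _ "f t"]) (auto simp: dist_real_def abs_minus_commute)
    qed
  qed
qed

theorem mainTheorem14:
  assumes "bridge B"
  shows "\<forall>\<epsilon>>0. \<exists>\<delta>>0. \<forall>B'. bridge B' \<and> skorohod_dist B B' < \<delta> \<longrightarrow> dH (IB B) (IB B') < \<epsilon>"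
proof (intro allI impI)
  fix \<epsilon> :: real assume "\<epsilon> > 0"
  have "dH (IB B) (IB B') < \<epsilon>" if B': "bridge B'" and close: "skorohod_dist B B' < \<epsilon>" for B'
  proof -
    have ranges: "B ` {0..1} \<subseteq> {0..1}" "B' ` {0..1} \<subseteq> {0..1}"
      using bridge_range_subset assms B' by blast+
    obtain d where "0 \<le> d" "d < \<epsilon>"
      "\<forall>y\<in>B ` {0..1}. \<exists>y'\<in>B' ` {0..1}. dist y y' \<le> d"
      "\<forall>y\<in>B' ` {0..1}. \<exists>y'\<in>B ` {0..1}. dist y y' \<le> d"
      using skorohod_dist_lt_imp_ranges_close[OF bridge_range_bounded bridge_range_bounded close]
        assms B' by blast
    then show ?thesis
      using dH_interior_complement_le[OF ranges] unfolding IB_def by fastforce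
  qed
  then show "\<exists>\<delta>>0. \<forall>B'. bridge B' \<and> skorohod_dist B B' < \<delta> \<longrightarrow> dH (IB B) (IB B') < \<epsilon>"
    using \<open>\<epsilon> > 0\<close> by blast
qed

end
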